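(* Let $M_1,M_2\in\mathbb{S}^n$ and let $$\mathcal{S}(\{M_1,M_2\})=\{X\in\mathbb{S}^n_+:\ \langle M_1,X\rangle\ge 0,\ \langle M_2,X\rangle\ge 0\}.$$ Then $\mathcal{S}(\{M_1,M_2\})$ is rank-one generated if and only if one of the following holds: (i) there exists $(\alpha_1,\alpha_2)\neq(0,0)$ such that $\alpha_1M_1+\alpha_2M_2\in\mathbb{S}^n_+$, or (ii) there exist $a,b,c\in\mathbb{R}^n$ such that $M_1=\mathrm{Sym}(ac^\top)$ and $M_2=\mathrm{Sym}(bc^\top)$.
   Context: $\mathbb{S}^n$ is the space of real symmetric $n\times n$ matrices with inner product $\langle A,B\rangle=\mathrm{tr}(AB)$, and $\mathbb{S}^n_+$ the cone of positive semidefinite matrices. For $M\in\mathbb{R}^{n\times n}$, $\mathrm{Sym}(M)=(M+M^\top)/2$. A closed convex cone $\mathcal{S}\subseteq\mathbb{S}^n_+$ is called rank-one generated (ROG) if $\mathcal{S}=\mathrm{conv}(\mathcal{S}\cap\{xx^\top: x\in\mathbb{R}^n\})$. *)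

theory Defs
  imports "HOL-Analysis.Analysis"
begin

definition sym_mat :: "real^'n^'n \<Rightarrow> bool" where
  "sym_mat A \<longleftrightarrow> transpose A = A"

definition psd :: "real^'n^'n \<Rightarrow> bool" where
  "psd A \<longleftrightarrow> sym_mat A \<and> (\<forall>x. x \<bullet> (A *v x) \<ge> 0)"

definition mat_inner :: "real^'n^'n \<Rightarrow> real^'n^'n \<Rightarrow> real" where
  "mat_inner A B = trace (A ** B)"

definition outer :: "real^'n \<Rightarrow> real^'n \<Rightarrow> real^'n^'n" where
  "outer a c = (\<chi> i j. a $ i * c $ j)"

definition Sym :: "real^'n^'n \<Rightarrow> real^'n^'n" where
  "Sym M = (1/2) *\<^sub>R (M + transpose M)"

definition ROG :: "(real^'n^'n) set \<Rightarrow> bool" where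
  "ROG S \<longleftrightarrow> S = convex hull (S \<inter> {outer x x | x. True})"

definition S2 :: "real^'n^'n \<Rightarrow> real^'n^'n \<Rightarrow> (real^'n^'n) set" where
  "S2 M1 M2 = {X. psd X \<and> mat_inner M1 X \<ge> 0 \<and> mat_inner M2 X \<ge> 0}"

end

theory Submission
  imports Defs
begin

text \<open>
  The cone \<open>S({M\<^sub>1, M\<^sub>2})\<close> is rank-one generated iff each of its elements is a sum of terms
  \<open>xx\<^sup>T\<close> with \<open>x\<^sup>T M\<^sub>1 x \<ge> 0\<close> and \<open>x\<^sup>T M\<^sub>2 x \<ge> 0\<close>. Rotating a pair of terms leaves
  \<open>uu\<^sup>T + vv\<^sup>T\<close> unchanged and moves \<open>x\<^sup>T K x\<close> continuously between its values at \<open>u\<close> and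
  \<open>v\<close>; this repairs one violated constraint at a time (Sturm--Zhang). If
  \<open>\<alpha>\<^sub>1 M\<^sub>1 + \<alpha>\<^sub>2 M\<^sub>2 \<succeq> 0\<close>, the second constraint can be repaired without breaking the first; if
  \<open>M\<^sub>i = Sym(a\<^sub>i c\<^sup>T)\<close>, the forms are \<open>(a\<^sub>i\<cdot>x)(c\<cdot>x)\<close>, and splitting off the term
  \<open>Xc(Xc)\<^sup>T / c\<^sup>TXc\<close> leaves terms orthogonal to \<open>c\<close>.

  Conversely, if no nontrivial combination is psd, separating the psd matrices of trace one from
  \<open>span {M\<^sub>1, M\<^sub>2}\<close> gives a positive definite \<open>Z\<close> with \<open>\<langle>M\<^sub>i, Z\<rangle> = 0\<close>, and its
  decomposition yields common isotropic vectors \<open>y\<^sub>1, y\<^sub>2\<close> with \<open>y\<^sub>1\<^sup>T M\<^sub>1 y\<^sub>2 \<noteq> 0\<close>.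
  Rank-one generation, applied to \<open>uu\<^sup>T + vv\<^sup>T\<close> with \<open>\<langle>M\<^sub>i, uu\<^sup>T + vv\<^sup>T\<rangle> = 0\<close>, forces the
  restrictions of \<open>M\<^sub>1, M\<^sub>2\<close> to \<open>span {u, v}\<close> to be linearly dependent. Testing this on vectors
  built from \<open>y\<^sub>1, y\<^sub>2\<close> and an arbitrary \<open>x\<close> shows that, once the pencil is normalised, both
  forms are products of linear forms with the common factor \<open>x \<mapsto> (M\<^sub>1 y\<^sub>1)\<cdot>x\<close>.
\<close>

section \<open>Quadratic forms and sums of rank-one matrices\<close>

definition quad :: "real^'n^'n \<Rightarrow> real^'n \<Rightarrow> real" where
  "quad M x = x \<bullet> (M *v x)"

definition bilin :: "real^'n^'n \<Rightarrow> real^'n \<Rightarrow> real^'n \<Rightarrow> real" where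
  "bilin M x y = x \<bullet> (M *v y)"

lemma quad_eq_bilin: "quad M x = bilin M x x"
  by (simp add: quad_def bilin_def)

lemma bilin_left_simps [simp]:
  "bilin M (x + y) z = bilin M x z + bilin M y z"
  "bilin M (x - y) z = bilin M x z - bilin M y z"
  "bilin M (c *\<^sub>R x) z = c * bilin M x z"
  "bilin M (- x) z = - bilin M x z"
  "bilin M 0 z = 0"
  by (simp_all add: bilin_def inner_add_left inner_diff_left)

lemma bilin_right_simps [simp]:
  "bilin M z (x + y) = bilin M z x + bilin M z y"
  "bilin M z (x - y) = bilin M z x - bilin M z y"
  "bilin M z (c *\<^sub>R x) = c * bilin M z x"
  "bilin M z (- x) = - bilin M z x"
  "bilin M z 0 = 0"
  by (simp_all add: bilin_def inner_add_right inner_diff_right matrix_vector_right_distrib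
      matrix_vector_mult_diff_distrib matrix_vector_mult_scaleR)
    (metis matrix_vector_mult_scaleR scaleR_minus1_left inner_scaleR_right mult_minus1)

lemma bilin_matrix_simps [simp]:
  "bilin (A + B) x y = bilin A x y + bilin B x y"
  "bilin (A - B) x y = bilin A x y - bilin B x y"
  "bilin (c *\<^sub>R A) x y = c * bilin A x y"
  "bilin 0 x y = 0"
  by (simp_all add: bilin_def matrix_vector_mult_add_rdistrib matrix_vector_mult_diff_rdistrib
      inner_add_right inner_diff_right flip: scaleR_matrix_vector_assoc)

lemma bilin_uminus_matrix [simp]: "bilin (- A) x y = - bilin A x y"
  using bilin_matrix_simps(2)[of 0 A] by simp

lemma quad_matrix_simps [simp]:
  "quad (A + B) x = quad A x + quad B x"
  "quad (A - B) x = quad A x - quad B x"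
  "quad (c *\<^sub>R A) x = c * quad A x"
  "quad (- A) x = - quad A x"
  "quad 0 x = 0"
  by (simp_all add: quad_eq_bilin)

lemma quad_scaleR [simp]: "quad M (c *\<^sub>R x) = c\<^sup>2 * quad M x"
  by (simp add: quad_eq_bilin power2_eq_square)

lemma quad_zero [simp]: "quad M 0 = 0"
  by (simp add: quad_eq_bilin)

lemma bilin_commute:
  assumes "sym_mat M"
  shows "bilin M x y = bilin M y x"
proof -
  have "x \<bullet> (M *v y) = (x v* M) \<bullet> y"
    by (simp add: dot_lmul_matrix)
  also have "x v* M = M *v x"
    using assms by (metis sym_mat_def transpose_matrix_vector)
  finally show ?thesis
    by (simp add: bilin_def inner_commute)
qed

lemma bilin_eq_inner_mult: "sym_mat M \<Longrightarrow> bilin M x y = (M *v x) \<bullet> y"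
  using bilin_commute[of M x y] by (simp add: bilin_def inner_commute)

lemma quad_add: "sym_mat M \<Longrightarrow> quad M (x + y) = quad M x + 2 * bilin M x y + quad M y"
  using bilin_commute[of M x y] by (simp add: quad_eq_bilin)

lemma quad_lincomb:
  "sym_mat M \<Longrightarrow>
    quad M (s *\<^sub>R u + t *\<^sub>R v) = s\<^sup>2 * quad M u + 2 * s * t * bilin M u v + t\<^sup>2 * quad M v"
  using quad_add[of M "s *\<^sub>R u" "t *\<^sub>R v"] by simp

lemma bilin_axis: "bilin M (axis i 1) (axis j 1) = M $ i $ j"
  unfolding bilin_def inner_axis'
  by (simp add: matrix_vector_mult_def axis_def if_distrib[of "\<lambda>x. _ * x"] cong: if_cong)

lemma quad_axis: "quad M (axis i 1) = M $ i $ i"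
  by (simp add: quad_eq_bilin bilin_axis)

lemma sym_mat_add: "sym_mat A \<Longrightarrow> sym_mat B \<Longrightarrow> sym_mat (A + B)"
  and sym_mat_diff: "sym_mat A \<Longrightarrow> sym_mat B \<Longrightarrow> sym_mat (A - B)"
  and sym_mat_scaleR: "sym_mat A \<Longrightarrow> sym_mat (c *\<^sub>R A)"
  and sym_mat_uminus: "sym_mat A \<Longrightarrow> sym_mat (- A)"
  and sym_mat_zero [simp]: "sym_mat 0"
  by (simp_all add: sym_mat_def transpose_def vec_eq_iff)

lemma sym_mat_eqI:
  assumes "sym_mat A" "sym_mat B" "\<And>x. quad A x = quad B x"
  shows "A = B"
proof -
  have "(A - B) $ i $ j = 0" for i j
    using quad_add[of "A - B" "axis i 1" "axis j 1"] assms
    by (simp add: bilin_axis sym_mat_diff)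
  then show ?thesis
    by (simp add: vec_eq_iff)
qed

lemma sym_Sym [simp]: "sym_mat (Sym M)"
  by (simp add: Sym_def sym_mat_def transpose_def vec_eq_iff)

lemma psd_iff_quad: "psd A \<longleftrightarrow> sym_mat A \<and> (\<forall>x. 0 \<le> quad A x)"
  by (simp add: psd_def quad_def)

lemma psd_combination_quad:
  "psd (\<alpha>1 *\<^sub>R M1 + \<alpha>2 *\<^sub>R M2) \<Longrightarrow> 0 \<le> \<alpha>1 * quad M1 x + \<alpha>2 * quad M2 x"
  by (simp add: psd_iff_quad)

lemma outer_mult_vec: "outer a c *v y = (c \<bullet> y) *\<^sub>R a"
  by (simp add: outer_def matrix_vector_mult_def vec_eq_iff inner_vec_def sum_distrib_left
      mult.commute mult.left_commute)

lemma transpose_outer: "transpose (outer a c) = outer c a"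
  by (simp add: outer_def transpose_def vec_eq_iff)

lemma outer_zero_left [simp]: "outer 0 c = 0"
  by (simp add: outer_def vec_eq_iff)

lemma sym_outer_self [simp]: "sym_mat (outer x x)"
  by (simp add: sym_mat_def transpose_outer)

lemma outer_scaleR_self: "outer (c *\<^sub>R x) (c *\<^sub>R x) = c\<^sup>2 *\<^sub>R outer x x"
  by (simp add: outer_def vec_eq_iff power2_eq_square algebra_simps)

lemma quad_outer_self [simp]: "quad (outer x x) y = (x \<bullet> y)\<^sup>2"
  by (simp add: quad_def outer_mult_vec power2_eq_square inner_commute)

lemma quad_Sym_outer: "quad (Sym (outer a c)) x = (a \<bullet> x) * (c \<bullet> x)"
  by (simp add: Sym_def transpose_outer) (simp add: quad_def outer_mult_vec inner_commute)

lemma Sym_outer_add: "Sym (outer (a + b) c) = Sym (outer a c) + Sym (outer b c)"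
  and Sym_outer_scaleR: "Sym (outer (k *\<^sub>R a) c) = k *\<^sub>R Sym (outer a c)"
  by (simp_all add: Sym_def outer_def transpose_def vec_eq_iff algebra_simps)

lemma mat_inner_simps [simp]:
  "mat_inner M (A + B) = mat_inner M A + mat_inner M B"
  "mat_inner M (A - B) = mat_inner M A - mat_inner M B"
  "mat_inner M (c *\<^sub>R A) = c * mat_inner M A"
  "mat_inner M 0 = 0"
  by (simp_all add: mat_inner_def trace_def matrix_matrix_mult_def sum.distrib distrib_left
      sum_subtractf right_diff_distrib sum_distrib_left mult.left_commute)

lemma mat_inner_outer_self [simp]: "mat_inner M (outer x x) = quad M x"
  by (simp add: mat_inner_def trace_def matrix_matrix_mult_def outer_def quad_def
      matrix_vector_mult_def inner_vec_def sum_distrib_left mult.commute mult.left_commute)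

definition outer_sum :: "(real^'n) list \<Rightarrow> real^'n^'n" where
  "outer_sum xs = sum_list (map (\<lambda>x. outer x x) xs)"

lemma outer_sum_Nil [simp]: "outer_sum [] = 0"
  and outer_sum_Cons [simp]: "outer_sum (x # xs) = outer x x + outer_sum xs"
  and outer_sum_append [simp]: "outer_sum (xs @ ys) = outer_sum xs + outer_sum ys"
  by (simp_all add: outer_sum_def)

lemma sum_list_map_mset_eq:
  fixes f :: "'a \<Rightarrow> 'b::comm_monoid_add"
  shows "mset xs = mset ys \<Longrightarrow> sum_list (map f xs) = sum_list (map f ys)"
  by (simp flip: sum_mset_sum_list)

lemma length_filter_mset_eq: "mset xs = mset ys \<Longrightarrow> length (filter P xs) = length (filter P ys)"
  by (metis mset_filter size_mset)

lemma outer_sum_mset_eq: "mset xs = mset ys \<Longrightarrow> outer_sum xs = outer_sum ys"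
  unfolding outer_sum_def by (rule sum_list_map_mset_eq)

lemma mat_inner_outer_sum: "mat_inner M (outer_sum xs) = sum_list (map (quad M) xs)"
  by (induction xs) auto

lemma quad_outer_sum: "quad (outer_sum xs) y = sum_list (map (\<lambda>x. (x \<bullet> y)\<^sup>2) xs)"
  by (induction xs) auto

lemma psd_outer_sum [simp]: "psd (outer_sum xs)"
proof -
  have "sym_mat (outer_sum xs)"
    by (induction xs) (auto intro: sym_mat_add)
  then show ?thesis
    unfolding psd_iff_quad quad_outer_sum by (auto intro!: sum_list_nonneg)
qed

lemma psd_outer_self: "psd (outer x x)"
  using psd_outer_sum[of "[x]"] by simp

lemma outer_sum_member_in_span:
  assumes "outer_sum ys = outer_sum zs" "y \<in> set ys"
  shows "y \<in> span (set zs)"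
proof -
  obtain p r where p: "p \<in> span (set zs)" and r: "\<And>w. w \<in> span (set zs) \<Longrightarrow> orthogonal r w"
    and y: "y = p + r"
    using orthogonal_subspace_decomp_exists by metis
  have "(y \<bullet> r)\<^sup>2 \<le> quad (outer_sum ys) r"
    unfolding quad_outer_sum using assms(2) by (auto intro!: member_le_sum_list)
  also have "\<dots> = sum_list (map (\<lambda>z. (z \<bullet> r)\<^sup>2) zs)"
    using assms(1) by (simp add: quad_outer_sum)
  also have "\<dots> = 0"
    using r by (intro sum_list_nonneg_eq_0_iff[THEN iffD2])
      (auto simp: orthogonal_def inner_commute span_base)
  finally have "y \<bullet> r = 0"
    by simp
  moreover have "p \<bullet> r = 0"
    using r[OF p] by (simp add: orthogonal_def inner_commute)
  ultimately have "r = 0"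
    using y by (simp add: inner_add_left)
  then show ?thesis
    using p y by simp
qed

lemma quadratic_nonneg_discrim_le:
  fixes a b c :: real
  assumes "\<And>t. 0 \<le> a + 2 * t * b + t\<^sup>2 * c" "0 \<le> c"
  shows "b\<^sup>2 \<le> a * c"
proof (cases "c = 0")
  case True
  have "b = 0"
  proof (rule ccontr)
    assume "b \<noteq> 0"
    then show False
      using assms(1)[of "- (a + 1) / (2 * b)"] True by (simp add: field_simps)
  qed
  then show ?thesis
    using True by simp
next
  case False
  then have "0 < c"
    using assms(2) by simp
  then show ?thesis
    using assms(1)[of "- b / c"] by (simp add: power2_eq_square field_simps)
qed

lemma psd_bilin_square_le:
  assumes "psd X"
  shows "(bilin X x y)\<^sup>2 \<le> quad X x * quad X y"
proof -
  have sym: "sym_mat X" and nonneg: "\<And>z. 0 \<le> quad X z"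
    using assms by (auto simp: psd_iff_quad)
  have "0 \<le> quad X x + 2 * t * bilin X x y + t\<^sup>2 * quad X y" for t
    using nonneg[of "x + t *\<^sub>R y"] quad_add[OF sym, of x "t *\<^sub>R y"] by (simp add: mult.assoc)
  then show ?thesis
    using quadratic_nonneg_discrim_le nonneg by blast
qed

lemma psd_diff_outer:
  assumes "psd X" "0 < quad X c"
  defines "y \<equiv> (1 / sqrt (quad X c)) *\<^sub>R (X *v c)"
  shows "psd (X - outer y y)" and "(X - outer y y) *v c = 0"
proof -
  have sym: "sym_mat X"
    using assms by (simp add: psd_iff_quad)
  define g where "g = quad X c"
  have "0 < g"
    using assms g_def by simp
  have y_inner: "y \<bullet> x = bilin X x c / sqrt g" for x
    using bilin_eq_inner_mult[OF sym, of c x] bilin_commute[OF sym, of c x]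
    by (simp add: y_def g_def divide_inverse mult.commute)
  have "0 \<le> quad (X - outer y y) x" for x
  proof -
    have "(bilin X x c)\<^sup>2 / g \<le> quad X x"
      using psd_bilin_square_le[OF assms(1), of x c] \<open>0 < g\<close> by (simp add: g_def field_simps)
    then show ?thesis
      using \<open>0 < g\<close> by (simp add: y_inner power_divide)
  qed
  then show "psd (X - outer y y)"
    using sym by (simp add: psd_iff_quad sym_mat_diff)
  have "y \<bullet> c = sqrt g"
    using y_inner[of c] \<open>0 < g\<close> by (simp add: quad_eq_bilin g_def real_div_sqrt)
  then have "outer y y *v c = X *v c"
    using \<open>0 < g\<close> by (simp add: outer_mult_vec y_def g_def)
  then show "(X - outer y y) *v c = 0"
    by (simp add: matrix_vector_mult_diff_rdistrib)
qed

lemma psd_diag_nonneg: "psd X \<Longrightarrow> 0 \<le> X $ j $ j"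
  by (metis psd_iff_quad quad_axis)

lemma psd_zero_diag_eq_0:
  assumes "psd X" "\<And>i. X $ i $ i = 0"
  shows "X = 0"
proof -
  have "X $ i $ j = 0" for i j
    using psd_bilin_square_le[OF assms(1), of "axis i 1" "axis j 1"] assms(2)
    by (simp add: bilin_axis quad_axis)
  then show ?thesis
    by (simp add: vec_eq_iff)
qed

text \<open>The rank-one term split off at a coordinate vector \<open>e\<^sub>i\<close> kills the \<open>i\<close>-th diagonal
  entry, and by positivity it cannot create new nonzero diagonal entries.\<close>

lemma psd_split_diagonal:
  assumes "psd X" "X $ i $ i \<noteq> 0"
  obtains y where "psd (X - outer y y)"
    "{j. (X - outer y y) $ j $ j \<noteq> 0} \<subseteq> {j. X $ j $ j \<noteq> 0} - {i}"
proof -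
  have pos: "0 < quad X (axis i 1)"
    using assms psd_diag_nonneg[OF assms(1), of i] by (simp add: quad_axis)
  define y where "y = (1 / sqrt (quad X (axis i 1))) *\<^sub>R (X *v axis i 1)"
  have psd: "psd (X - outer y y)"
    using psd_diff_outer(1)[OF assms(1) pos] by (simp add: y_def)
  have "(X - outer y y) *v axis i 1 = 0"
    using psd_diff_outer(2)[OF assms(1) pos] by (simp add: y_def)
  then have "(X - outer y y) $ i $ i = 0"
    by (metis quad_axis quad_def inner_zero_right)
  moreover have "(X - outer y y) $ j $ j = 0" if "X $ j $ j = 0" for j
  proof -
    have "(X - outer y y) $ j $ j = - (y $ j)\<^sup>2"
      using that by (simp add: outer_def power2_eq_square)
    then show ?thesis
      using psd_diag_nonneg[OF psd, of j] by simp
  qed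
  ultimately show ?thesis
    using that psd by blast
qed

lemma psd_imp_outer_sum:
  assumes "psd X"
  shows "\<exists>xs. X = outer_sum xs"
  using assms
proof (induction "card {i. X $ i $ i \<noteq> 0}" arbitrary: X rule: less_induct)
  case less
  show ?case
  proof (cases "\<forall>i. X $ i $ i = 0")
    case True
    then have "X = outer_sum []"
      using psd_zero_diag_eq_0[OF less.prems] by simp
    then show ?thesis
      by blast
  next
    case False
    then obtain i where i: "X $ i $ i \<noteq> 0"
      by auto
    obtain y where psd: "psd (X - outer y y)"
      and diag: "{j. (X - outer y y) $ j $ j \<noteq> 0} \<subseteq> {j. X $ j $ j \<noteq> 0} - {i}"
      using psd_split_diagonal[OF less.prems i] .
    have "card {j. (X - outer y y) $ j $ j \<noteq> 0} \<le> card ({j. X $ j $ j \<noteq> 0} - {i})"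
      using diag by (simp add: card_mono)
    also have "\<dots> < card {j. X $ j $ j \<noteq> 0}"
      using i by (intro card_Diff1_less) auto
    finally obtain xs where "X - outer y y = outer_sum xs"
      using less.hyps psd by blast
    then have "X = outer_sum (y # xs)"
      by (simp add: algebra_simps)
    then show ?thesis
      by blast
  qed
qed

definition rank_one_decomposable :: "real^'n^'n \<Rightarrow> real^'n^'n \<Rightarrow> real^'n^'n \<Rightarrow> bool" where
  "rank_one_decomposable M1 M2 X \<longleftrightarrow>
    (\<exists>ys. X = outer_sum ys \<and> (\<forall>y\<in>set ys. 0 \<le> quad M1 y \<and> 0 \<le> quad M2 y))"

lemma rank_one_decomposable_commute:
  "rank_one_decomposable M1 M2 X \<longleftrightarrow> rank_one_decomposable M2 M1 X"
  by (auto simp: rank_one_decomposable_def)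

lemma S2_commute: "S2 M1 M2 = S2 M2 M1"
  by (auto simp: S2_def)

lemma outer_sum_map_scaleR: "outer_sum (map ((*\<^sub>R) c) ys) = c\<^sup>2 *\<^sub>R outer_sum ys"
  by (induction ys) (simp_all add: outer_scaleR_self scaleR_add_right)

lemma rank_one_decomposable_add:
  "rank_one_decomposable M1 M2 X \<Longrightarrow> rank_one_decomposable M1 M2 Y \<Longrightarrow>
    rank_one_decomposable M1 M2 (X + Y)"
  unfolding rank_one_decomposable_def by (metis Un_iff outer_sum_append set_append)

lemma rank_one_decomposable_scaleR:
  assumes "0 \<le> c" "rank_one_decomposable M1 M2 X"
  shows "rank_one_decomposable M1 M2 (c *\<^sub>R X)"
proof -
  obtain ys where "X = outer_sum ys" "\<forall>y\<in>set ys. 0 \<le> quad M1 y \<and> 0 \<le> quad M2 y"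
    using assms(2) by (auto simp: rank_one_decomposable_def)
  moreover have "c *\<^sub>R outer_sum ys = outer_sum (map ((*\<^sub>R) (sqrt c)) ys)"
    using assms(1) by (simp add: outer_sum_map_scaleR)
  ultimately show ?thesis
    unfolding rank_one_decomposable_def
    by (intro exI[of _ "map ((*\<^sub>R) (sqrt c)) ys"]) auto
qed

lemma convex_rank_one_decomposable: "convex {X. rank_one_decomposable M1 M2 X}"
  by (rule convexI) (simp add: rank_one_decomposable_add rank_one_decomposable_scaleR)

lemma cone_S2_rank_one: "cone (S2 M1 M2 \<inter> {outer x x | x. True})"
proof (unfold cone_def, intro ballI allI impI)
  fix z and c :: real
  assume "z \<in> S2 M1 M2 \<inter> {outer x x | x. True}" "0 \<le> c"
  then obtain x where "z = outer x x" "0 \<le> quad M1 x" "0 \<le> quad M2 x"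
    by (auto simp: S2_def)
  moreover have "c *\<^sub>R z = outer (sqrt c *\<^sub>R x) (sqrt c *\<^sub>R x)"
    using \<open>0 \<le> c\<close> \<open>z = outer x x\<close> by (simp add: outer_scaleR_self)
  ultimately show "c *\<^sub>R z \<in> S2 M1 M2 \<inter> {outer x x | x. True}"
    using \<open>0 \<le> c\<close> by (auto simp: S2_def psd_outer_self)
qed

lemma convex_S2: "convex (S2 M1 M2)"
  by (rule convexI) (auto simp: S2_def psd_iff_quad intro!: sym_mat_add sym_mat_scaleR)

lemma convex_hull_S2_rank_one_decomposable:
  "convex hull (S2 M1 M2 \<inter> {outer x x | x. True}) \<subseteq> {X. rank_one_decomposable M1 M2 X}"
proof (rule hull_minimal)
  show "S2 M1 M2 \<inter> {outer x x | x. True} \<subseteq> {X. rank_one_decomposable M1 M2 X}"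
  proof
    fix z assume "z \<in> S2 M1 M2 \<inter> {outer x x | x. True}"
    then obtain x where "z = outer_sum [x]" "0 \<le> quad M1 x" "0 \<le> quad M2 x"
      by (auto simp: S2_def)
    then show "z \<in> {X. rank_one_decomposable M1 M2 X}"
      unfolding rank_one_decomposable_def by fastforce
  qed
qed (rule convex_rank_one_decomposable)

lemma outer_sum_in_convex_hull_S2:
  assumes "\<forall>y\<in>set ys. 0 \<le> quad M1 y \<and> 0 \<le> quad M2 y"
  shows "outer_sum ys \<in> convex hull (S2 M1 M2 \<inter> {outer x x | x. True})"
  using assms
proof (induction ys)
  let ?T = "S2 M1 M2 \<inter> {outer x x | x. True}"
  case Nil
  have "outer 0 0 \<in> ?T"
    by (auto simp: S2_def psd_outer_self simp del: outer_zero_left)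
  then have "outer 0 0 \<in> convex hull ?T"
    by (rule hull_inc)
  then show ?case
    by simp
next
  let ?T = "S2 M1 M2 \<inter> {outer x x | x. True}"
  case (Cons y ys)
  then have "outer y y \<in> convex hull ?T"
    by (auto simp: S2_def psd_outer_self intro: hull_inc)
  moreover have "outer_sum ys \<in> convex hull ?T"
    using Cons by simp
  ultimately show ?case
    using convex_cone cone_convex_hull[OF cone_S2_rank_one] convex_convex_hull
    unfolding outer_sum_Cons by blast
qed

lemma ROG_S2_iff: "ROG (S2 M1 M2) \<longleftrightarrow> (\<forall>X\<in>S2 M1 M2. rank_one_decomposable M1 M2 X)"
proof
  assume "ROG (S2 M1 M2)"
  then show "\<forall>X\<in>S2 M1 M2. rank_one_decomposable M1 M2 X"
    using convex_hull_S2_rank_one_decomposable unfolding ROG_def by blast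
next
  assume decomposable: "\<forall>X\<in>S2 M1 M2. rank_one_decomposable M1 M2 X"
  have "S2 M1 M2 \<subseteq> convex hull (S2 M1 M2 \<inter> {outer x x | x. True})"
  proof
    fix X assume "X \<in> S2 M1 M2"
    then obtain ys where "X = outer_sum ys" "\<forall>y\<in>set ys. 0 \<le> quad M1 y \<and> 0 \<le> quad M2 y"
      using decomposable by (auto simp: rank_one_decomposable_def)
    then show "X \<in> convex hull (S2 M1 M2 \<inter> {outer x x | x. True})"
      using outer_sum_in_convex_hull_S2[of ys M1 M2] by simp
  qed
  moreover have "convex hull (S2 M1 M2 \<inter> {outer x x | x. True}) \<subseteq> S2 M1 M2"
    by (rule hull_minimal) (auto simp: convex_S2)
  ultimately show "ROG (S2 M1 M2)"
    unfolding ROG_def by blast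
qed

section \<open>Rotating pairs of rank-one terms\<close>

lemma outer_rotation:
  assumes "c\<^sup>2 + s\<^sup>2 = (1::real)"
  shows "outer (c *\<^sub>R u + s *\<^sub>R v) (c *\<^sub>R u + s *\<^sub>R v)
      + outer ((- s) *\<^sub>R u + c *\<^sub>R v) ((- s) *\<^sub>R u + c *\<^sub>R v) = outer u u + outer v v"
proof -
  have "(c * a + s * d) * (c * b + s * e) + (- s * a + c * d) * (- s * b + c * e)
      = (c\<^sup>2 + s\<^sup>2) * (a * b + d * e)" for a b d e :: real
    by (simp add: power2_eq_square algebra_simps)
  then show ?thesis
    using assms by (simp add: outer_def vec_eq_iff)
qed

lemma quad_sum_eq_if_outer_sum_eq:
  assumes "outer a a + outer b b = outer u u + outer v v"
  shows "quad N a + quad N b = quad N u + quad N v"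
  using arg_cong[OF assms, of "mat_inner N"] by simp

text \<open>Rotating the pair \<open>(u, v)\<close> leaves \<open>uu\<^sup>T + vv\<^sup>T\<close> unchanged, and along a quarter turn \<open>quad K\<close>
  of the first vector moves continuously from \<open>quad K u\<close> to \<open>quad K v\<close>.\<close>

lemma rotate_pair_to_zero:
  assumes "quad K u \<le> 0" "0 \<le> quad K v"
  obtains a b where "outer a a + outer b b = outer u u + outer v v" "quad K a = 0"
proof -
  define f where "f t = quad K (cos t *\<^sub>R u + sin t *\<^sub>R v)" for t
  have "f = (\<lambda>t. (cos t)\<^sup>2 * quad K u + cos t * sin t * (bilin K u v + bilin K v u)
      + (sin t)\<^sup>2 * quad K v)"
    by (simp add: fun_eq_iff f_def quad_eq_bilin power2_eq_square algebra_simps)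
  then have "continuous_on {0..pi/2} f"
    by (simp only:) (intro continuous_intros)
  moreover have "f 0 = quad K u" "f (pi/2) = quad K v"
    by (simp_all add: f_def)
  ultimately obtain t where "f t = 0"
    using assms IVT'[of f 0 0 "pi/2"] by force
  moreover have "outer (cos t *\<^sub>R u + sin t *\<^sub>R v) (cos t *\<^sub>R u + sin t *\<^sub>R v)
      + outer ((- sin t) *\<^sub>R u + cos t *\<^sub>R v) ((- sin t) *\<^sub>R u + cos t *\<^sub>R v) = outer u u + outer v v"
    by (rule outer_rotation) (simp add: add.commute)
  ultimately show ?thesis
    using that unfolding f_def by blast
qed

lemma obtain_opposite_pair:
  fixes f :: "'a \<Rightarrow> real"
  assumes "0 \<le> sum_list (map f xs)" "x \<in> set xs" "f x < 0"
  obtains x' rest where "0 < f x'" "mset xs = mset (x # x' # rest)"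
proof -
  have sum: "sum_list (map f xs) = f x + sum_list (map f (remove1 x xs))"
    using assms(2) by (simp add: sum_list_map_remove1)
  have "\<exists>x'\<in>set (remove1 x xs). 0 < f x'"
  proof (rule ccontr)
    assume "\<not> ?thesis"
    then have "sum_list (map f (remove1 x xs)) \<le> 0"
      using sum_list_nonpos[of "map f (remove1 x xs)"] by (auto simp: not_less)
    then show False
      using assms sum by linarith
  qed
  then obtain x' where "x' \<in> set (remove1 x xs)" "0 < f x'"
    by blast
  moreover have "mset ys = add_mset y (mset (remove1 y ys))" if "y \<in> set ys" for y :: 'a and ys
    using that by (simp add: insert_DiffM)
  ultimately have "mset xs = mset (x # x' # remove1 x' (remove1 x xs))"
    using assms(2) by (metis mset.simps(2))
  then show ?thesis
    using that \<open>0 < f x'\<close> by blast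
qed

text \<open>One quadratic constraint can always be met termwise (Sturm and Zhang): a negative term
  is rotated against a positive one until it becomes zero.\<close>

lemma outer_sum_rearrange_nonneg:
  "0 \<le> sum_list (map (quad M) xs) \<Longrightarrow>
    \<exists>ys. outer_sum ys = outer_sum xs \<and> (\<forall>y\<in>set ys. 0 \<le> quad M y)"
proof (induction "length xs" arbitrary: xs rule: less_induct)
  case less
  show ?case
  proof (cases "\<forall>x\<in>set xs. 0 \<le> quad M x")
    case False
    then obtain x where x: "x \<in> set xs" "quad M x < 0"
      by (auto simp: not_le)
    obtain x' rest where x': "0 < quad M x'" and xs: "mset xs = mset (x # x' # rest)"
      using obtain_opposite_pair[OF less.prems x] .
    obtain a b where ab: "outer a a + outer b b = outer x x + outer x' x'" "quad M a = 0"
      using rotate_pair_to_zero[of M x x'] x x' by auto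
    have "0 \<le> sum_list (map (quad M) (b # rest))"
      using less.prems quad_sum_eq_if_outer_sum_eq[OF ab(1), of M] ab(2)
      by (simp add: sum_list_map_mset_eq[OF xs])
    moreover have "length (b # rest) < length xs"
      using mset_eq_length[OF xs] by simp
    ultimately obtain ys where ys: "outer_sum ys = outer_sum (b # rest)" "\<forall>y\<in>set ys. 0 \<le> quad M y"
      using less.hyps by blast
    have "outer_sum (a # ys) = outer_sum xs"
      using ys(1) ab(1) outer_sum_mset_eq[OF xs] by (simp add: algebra_simps)
    then show ?thesis
      using ys(2) ab(2) by (intro exI[of _ "a # ys"]) auto
  qed blast
qed

lemma psd_outer_sum_nonneg:
  assumes "psd X" "0 \<le> mat_inner M X"
  shows "\<exists>ys. X = outer_sum ys \<and> (\<forall>y\<in>set ys. 0 \<le> quad M y)"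
proof -
  obtain xs where "X = outer_sum xs"
    using psd_imp_outer_sum[OF assms(1)] by blast
  then show ?thesis
    using outer_sum_rearrange_nonneg[of M xs] assms(2) by (metis mat_inner_outer_sum)
qed

lemma proportional_split_bounds:
  fixes s1 s2 A1 A2 \<alpha>1 \<alpha>2 :: real
  assumes "0 < \<alpha>1" "0 < \<alpha>2" "0 < s1" "0 \<le> s2" "s2 * A1 = s1 * A2"
    "0 \<le> \<alpha>1 * A1 + \<alpha>2 * A2" "0 \<le> \<alpha>1 * (s1 - A1) + \<alpha>2 * (s2 - A2)"
  shows "0 \<le> A1 \<and> A1 \<le> s1 \<and> 0 \<le> A2 \<and> A2 \<le> s2"
proof -
  define k where "k = \<alpha>1 * s1 + \<alpha>2 * s2"
  have "0 < k"
    unfolding k_def using assms by (simp add: add_pos_nonneg)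
  have "s1 * (\<alpha>1 * A1 + \<alpha>2 * A2) = A1 * k"
    "s1 * (\<alpha>1 * (s1 - A1) + \<alpha>2 * (s2 - A2)) = (s1 - A1) * k"
    unfolding k_def using assms(5) by (simp_all add: algebra_simps)
  then have "0 \<le> A1 * k" "0 \<le> (s1 - A1) * k"
    using assms(3,6,7) by (metis mult_nonneg_nonneg less_imp_le)+
  then have "0 \<le> A1" "A1 \<le> s1"
    using \<open>0 < k\<close> by (simp_all add: zero_le_mult_iff)
  moreover from this have "0 \<le> s1 * A2" "s1 * A2 \<le> s1 * s2"
    using assms(4,5) by (metis mult_nonneg_nonneg, metis mult.commute mult_left_mono)
  ultimately show ?thesis
    using assms(3) by (simp add: zero_le_mult_iff)
qed

text \<open>If \<open>\<alpha>\<^sub>1 M\<^sub>1 + \<alpha>\<^sub>2 M\<^sub>2 \<succeq> 0\<close> with \<open>\<alpha>\<^sub>i > 0\<close>, two terms that are feasible for \<open>M\<^sub>1\<close> and have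
  nonnegative total for \<open>M\<^sub>2\<close> can be rotated into two feasible terms: choose the rotation that
  makes \<open>(quad M\<^sub>1 a, quad M\<^sub>2 a)\<close> proportional to the totals \<open>(s\<^sub>1, s\<^sub>2)\<close>.\<close>

lemma exchange_pair_nonneg_total:
  assumes "0 < \<alpha>1" "0 < \<alpha>2" and comb: "\<And>x. 0 \<le> \<alpha>1 * quad M1 x + \<alpha>2 * quad M2 x"
    and "0 \<le> quad M1 u" "0 \<le> quad M1 v" "quad M2 u < 0" "0 \<le> quad M2 u + quad M2 v"
  obtains a b where "outer a a + outer b b = outer u u + outer v v"
    "0 \<le> quad M1 a" "0 \<le> quad M2 a" "0 \<le> quad M1 b" "0 \<le> quad M2 b"
proof -
  define s1 where "s1 = quad M1 u + quad M1 v"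
  define s2 where "s2 = quad M2 u + quad M2 v"
  define K where "K = s2 *\<^sub>R M1 - s1 *\<^sub>R M2"
  have "quad K u + quad K v = 0"
    unfolding K_def s1_def s2_def by (simp add: algebra_simps)
  then obtain a b where ab: "outer a a + outer b b = outer u u + outer v v" "quad K a = 0"
    using rotate_pair_to_zero[of K u v] rotate_pair_to_zero[of K v u]
    by (metis add.commute add_le_same_cancel1 linorder_le_cases)
  have b: "quad M1 b = s1 - quad M1 a" "quad M2 b = s2 - quad M2 a"
    using quad_sum_eq_if_outer_sum_eq[OF ab(1), of M1] quad_sum_eq_if_outer_sum_eq[OF ab(1), of M2]
    unfolding s1_def s2_def by linarith+
  have "0 < s1"
  proof (rule ccontr)
    assume "\<not> 0 < s1"
    then have "quad M1 u = 0"
      using assms(4,5) by (simp add: s1_def)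
    then show False
      using comb[of u] mult_pos_neg[OF assms(2,6)] by simp
  qed
  then have "0 \<le> quad M1 a \<and> quad M1 a \<le> s1 \<and> 0 \<le> quad M2 a \<and> quad M2 a \<le> s2"
    using assms(1-7) ab(2) comb[of a] comb[of b] b
    by (intro proportional_split_bounds[of \<alpha>1 \<alpha>2]) (auto simp: K_def s1_def s2_def)
  then show ?thesis
    using that ab(1) b by simp
qed

lemma exchange_pair_neg_total:
  assumes "0 < \<alpha>1" "0 < \<alpha>2" and comb: "\<And>x. 0 \<le> \<alpha>1 * quad M1 x + \<alpha>2 * quad M2 x"
    and "quad M2 u \<le> 0" "0 \<le> quad M2 v" "quad M2 u + quad M2 v < 0"
  obtains a b where "outer a a + outer b b = outer u u + outer v v"
    "0 \<le> quad M1 a" "0 \<le> quad M2 a" "0 \<le> quad M1 b" "quad M2 b = quad M2 u + quad M2 v"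
proof -
  obtain a b where ab: "outer a a + outer b b = outer u u + outer v v" "quad M2 a = 0"
    using rotate_pair_to_zero[of M2 u v] assms(4,5) by auto
  have b: "quad M2 b = quad M2 u + quad M2 v"
    using quad_sum_eq_if_outer_sum_eq[OF ab(1), of M2] ab(2) by simp
  have "0 \<le> quad M1 a"
    using comb[of a] ab(2) assms(1) by (simp add: zero_le_mult_iff)
  moreover have "0 < \<alpha>1 * quad M1 b"
    using comb[of b] b assms(2,6) by (smt (verit) mult_pos_neg)
  then have "0 \<le> quad M1 b"
    using assms(1) by (simp add: zero_less_mult_iff)
  ultimately show ?thesis
    using that ab b by simp
qed

text \<open>The measure counts the terms plus the terms negative for \<open>M\<^sub>2\<close>: exchanging a pair with
  negative total drops one term, exchanging a pair with nonnegative total drops one negative term.\<close>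

lemma outer_sum_rearrange_nonneg_both:
  assumes "0 < \<alpha>1" "0 < \<alpha>2" and comb: "\<And>x. 0 \<le> \<alpha>1 * quad M1 x + \<alpha>2 * quad M2 x"
  shows "\<forall>x\<in>set xs. 0 \<le> quad M1 x \<Longrightarrow> 0 \<le> sum_list (map (quad M2) xs) \<Longrightarrow>
    \<exists>ys. outer_sum ys = outer_sum xs \<and> (\<forall>y\<in>set ys. 0 \<le> quad M1 y \<and> 0 \<le> quad M2 y)"
proof (induction "length xs + length (filter (\<lambda>x. quad M2 x < 0) xs)" arbitrary: xs
    rule: less_induct)
  case less
  let ?neg = "\<lambda>xs. length (filter (\<lambda>x. quad M2 x < 0) xs)"
  show ?case
  proof (cases "\<forall>x\<in>set xs. 0 \<le> quad M2 x")
    case False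
    then obtain x where x: "x \<in> set xs" "quad M2 x < 0"
      by (auto simp: not_le)
    obtain x' rest where x': "0 < quad M2 x'" and xs: "mset xs = mset (x # x' # rest)"
      using obtain_opposite_pair[OF less.prems(2) x] .
    have set_xs: "set xs = set (x # x' # rest)" and len: "length xs = length rest + 2"
      and neg: "?neg xs = ?neg rest + 1"
      and sum: "sum_list (map (quad M2) xs) = quad M2 x + quad M2 x' + sum_list (map (quad M2) rest)"
      using mset_eq_setD[OF xs] mset_eq_length[OF xs] sum_list_map_mset_eq[OF xs, of "quad M2"]
        length_filter_mset_eq[OF xs, of "\<lambda>x. quad M2 x < 0"] x x'
      by auto
    show ?thesis
    proof (cases "quad M2 x + quad M2 x' < 0")
      case True
      obtain a b where ab: "outer a a + outer b b = outer x x + outer x' x'"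
        "0 \<le> quad M1 a" "0 \<le> quad M2 a" "0 \<le> quad M1 b" "quad M2 b = quad M2 x + quad M2 x'"
        using exchange_pair_neg_total[OF assms, of x x'] x x' True by auto
      obtain ys where "outer_sum ys = outer_sum (b # rest)"
        "\<forall>y\<in>set ys. 0 \<le> quad M1 y \<and> 0 \<le> quad M2 y"
        using less.hyps[of "b # rest"] less.prems ab True set_xs len neg sum by auto
      then show ?thesis
        using ab outer_sum_mset_eq[OF xs]
        by (intro exI[of _ "a # ys"]) (auto simp: algebra_simps)
    next
      case False
      obtain a b where ab: "outer a a + outer b b = outer x x + outer x' x'"
        "0 \<le> quad M1 a" "0 \<le> quad M2 a" "0 \<le> quad M1 b" "0 \<le> quad M2 b"
        using exchange_pair_nonneg_total[OF assms, of x x'] less.prems(1) set_xs x False by auto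
      have "sum_list (map (quad M2) (a # b # rest)) = sum_list (map (quad M2) xs)"
        using quad_sum_eq_if_outer_sum_eq[OF ab(1), of M2] sum by simp
      then obtain ys where "outer_sum ys = outer_sum (a # b # rest)"
        "\<forall>y\<in>set ys. 0 \<le> quad M1 y \<and> 0 \<le> quad M2 y"
        using less.hyps[of "a # b # rest"] less.prems ab set_xs len neg by auto
      then show ?thesis
        using ab(1) outer_sum_mset_eq[OF xs] by (auto simp: algebra_simps)
    qed
  qed (use less.prems(1) in blast)
qed

section \<open>The two sufficient conditions\<close>

lemma rank_one_decomposable_pos_pos:
  assumes "0 < \<alpha>1" "0 < \<alpha>2" "psd (\<alpha>1 *\<^sub>R M1 + \<alpha>2 *\<^sub>R M2)" "X \<in> S2 M1 M2"
  shows "rank_one_decomposable M1 M2 X"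
proof -
  obtain xs where xs: "X = outer_sum xs" "\<forall>x\<in>set xs. 0 \<le> quad M1 x"
    using psd_outer_sum_nonneg[of X M1] assms(4) by (auto simp: S2_def)
  moreover have "0 \<le> sum_list (map (quad M2) xs)"
    using assms(4) xs(1) by (simp add: S2_def mat_inner_outer_sum)
  ultimately show ?thesis
    using outer_sum_rearrange_nonneg_both[OF assms(1,2) psd_combination_quad[OF assms(3)]]
    unfolding rank_one_decomposable_def by metis
qed

lemma rank_one_decomposable_pos_nonpos:
  assumes "0 < \<alpha>1" "\<alpha>2 \<le> 0" "psd (\<alpha>1 *\<^sub>R M1 + \<alpha>2 *\<^sub>R M2)" "X \<in> S2 M1 M2"
  shows "rank_one_decomposable M1 M2 X"
proof -
  obtain ys where ys: "X = outer_sum ys" "\<forall>y\<in>set ys. 0 \<le> quad M2 y"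
    using psd_outer_sum_nonneg[of X M2] assms(4) by (auto simp: S2_def)
  have "0 \<le> quad M1 y" if "y \<in> set ys" for y
  proof -
    have "0 \<le> - \<alpha>2 * quad M2 y"
      using assms(2) ys(2) that by (simp add: mult_nonpos_nonneg)
    also have "\<dots> \<le> \<alpha>1 * quad M1 y"
      using psd_combination_quad[OF assms(3), of y] by linarith
    finally show ?thesis
      using assms(1) by (simp add: zero_le_mult_iff)
  qed
  then show ?thesis
    using ys unfolding rank_one_decomposable_def by blast
qed

lemma rank_one_decomposable_neg_nonpos:
  assumes "\<alpha>1 < 0" "\<alpha>2 \<le> 0" "psd (\<alpha>1 *\<^sub>R M1 + \<alpha>2 *\<^sub>R M2)" "X \<in> S2 M1 M2"
  shows "rank_one_decomposable M1 M2 X"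
proof -
  obtain ys where ys: "X = outer_sum ys" "\<forall>y\<in>set ys. 0 \<le> quad M2 y"
    using psd_outer_sum_nonneg[of X M2] assms(4) by (auto simp: S2_def)
  have nonpos: "quad M1 y \<le> 0" if "y \<in> set ys" for y
  proof -
    have "0 \<le> - \<alpha>2 * quad M2 y"
      using assms(2) ys(2) that by (simp add: mult_nonpos_nonneg)
    also have "\<dots> \<le> \<alpha>1 * quad M1 y"
      using psd_combination_quad[OF assms(3), of y] by linarith
    finally show ?thesis
      using assms(1) by (simp add: zero_le_mult_iff)
  qed
  have "0 \<le> sum_list (map (quad M1) ys)"
    using assms(4) ys(1) by (simp add: S2_def mat_inner_outer_sum)
  then have "sum_list (map (uminus \<circ> quad M1) ys) = 0"
    using sum_list_nonpos[of "map (quad M1) ys"] nonpos by (auto simp flip: uminus_sum_list_map)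
  then have "quad M1 y = 0" if "y \<in> set ys" for y
    using sum_list_nonneg_eq_0_iff[of "map (uminus \<circ> quad M1) ys"] nonpos that by force
  then show ?thesis
    using ys unfolding rank_one_decomposable_def by fastforce
qed

lemma rank_one_decomposable_if_psd_combination:
  assumes "(\<alpha>1, \<alpha>2) \<noteq> (0, 0)" "psd (\<alpha>1 *\<^sub>R M1 + \<alpha>2 *\<^sub>R M2)" "X \<in> S2 M1 M2"
  shows "rank_one_decomposable M1 M2 X"
proof -
  have swapped: "psd (\<alpha>2 *\<^sub>R M2 + \<alpha>1 *\<^sub>R M1)" "X \<in> S2 M2 M1"
    using assms by (simp_all add: add.commute S2_commute)
  consider "0 < \<alpha>1" "0 < \<alpha>2" | "0 < \<alpha>1" "\<alpha>2 \<le> 0" | "\<alpha>1 \<le> 0" "0 < \<alpha>2"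
    | "\<alpha>1 < 0" "\<alpha>2 \<le> 0" | "\<alpha>2 < 0" "\<alpha>1 \<le> 0"
    using assms(1) by fastforce
  then show ?thesis
  proof cases
    case 1
    then show ?thesis using rank_one_decomposable_pos_pos assms(2,3) by blast
  next
    case 2
    then show ?thesis using rank_one_decomposable_pos_nonpos assms(2,3) by blast
  next
    case 3
    then show ?thesis
      using rank_one_decomposable_pos_nonpos[OF _ _ swapped] rank_one_decomposable_commute by blast
  next
    case 4
    then show ?thesis using rank_one_decomposable_neg_nonpos assms(2,3) by blast
  next
    case 5
    then show ?thesis
      using rank_one_decomposable_neg_nonpos[OF _ _ swapped] rank_one_decomposable_commute by blast
  qed
qed

lemma mat_inner_Sym_outer:
  assumes "sym_mat X"
  shows "mat_inner (Sym (outer a c)) X = a \<bullet> (X *v c)"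
proof -
  have "mat_inner (Sym (outer a c)) X = (a \<bullet> (transpose X *v c) + c \<bullet> (transpose X *v a)) / 2"
    by (simp add: Sym_def transpose_outer mat_inner_def trace_def matrix_matrix_mult_def outer_def
        inner_vec_def matrix_vector_mult_def transpose_def sum_distrib_left sum.distrib
        add_divide_distrib sum_divide_distrib algebra_simps)
  also have "transpose X = X"
    using assms by (simp add: sym_mat_def)
  also have "c \<bullet> (X *v a) = a \<bullet> (X *v c)"
    using bilin_commute[OF assms, of c a] by (simp add: bilin_def)
  finally show ?thesis
    by simp
qed

lemma outer_sum_orthogonal_if_quad_zero:
  "quad (outer_sum ys) c = 0 \<Longrightarrow> y \<in> set ys \<Longrightarrow> y \<bullet> c = 0"
  unfolding quad_outer_sum by (subst (asm) sum_list_nonneg_eq_0_iff) auto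

lemma rank_one_decomposable_Sym_outer:
  assumes M: "M1 = Sym (outer a c)" "M2 = Sym (outer b c)" and X: "X \<in> S2 M1 M2"
  shows "rank_one_decomposable M1 M2 X"
proof -
  have psd: "psd X"
    using X by (simp add: S2_def)
  then have "sym_mat X"
    by (simp add: psd_iff_quad)
  then have Xc: "0 \<le> a \<bullet> (X *v c)" "0 \<le> b \<bullet> (X *v c)"
    using X by (simp_all add: S2_def M mat_inner_Sym_outer)
  have feasible_if_orthogonal: "\<forall>y\<in>set ys. 0 \<le> quad M1 y \<and> 0 \<le> quad M2 y"
    if "quad (outer_sum ys) c = 0" for ys
    using outer_sum_orthogonal_if_quad_zero[OF that] by (simp add: M quad_Sym_outer inner_commute)
  show ?thesis
  proof (cases "quad X c = 0")
    case True
    then show ?thesis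
      using psd_imp_outer_sum[OF psd] feasible_if_orthogonal
      unfolding rank_one_decomposable_def by blast
  next
    case False
    then have g: "0 < quad X c"
      using psd by (simp add: psd_iff_quad order_le_neq_trans)
    define y where "y = (1 / sqrt (quad X c)) *\<^sub>R (X *v c)"
    obtain rs where rs: "X - outer y y = outer_sum rs"
      using psd_imp_outer_sum psd_diff_outer(1)[OF psd g] unfolding y_def by blast
    have "quad (outer_sum rs) c = 0"
      using psd_diff_outer(2)[OF psd g] rs unfolding y_def by (simp add: quad_def)
    moreover have "0 \<le> quad M1 y" "0 \<le> quad M2 y"
    proof -
      have "c \<bullet> y = sqrt (quad X c)"
        using g by (simp add: y_def quad_def real_div_sqrt)
      moreover have "0 \<le> a \<bullet> y" "0 \<le> b \<bullet> y"
        using Xc g by (simp_all add: y_def divide_nonneg_nonneg)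
      ultimately show "0 \<le> quad M1 y" "0 \<le> quad M2 y"
        using g by (simp_all add: M quad_Sym_outer)
    qed
    moreover have "X = outer_sum (y # rs)"
      using rs by (simp add: algebra_simps)
    ultimately show ?thesis
      using feasible_if_orthogonal unfolding rank_one_decomposable_def by (metis set_ConsD)
  qed
qed

section \<open>A common isotropic pair\<close>

lemma trace_scaleR: "trace (c *\<^sub>R (A :: real^'n^'n)) = c * trace A"
  by (simp add: trace_def sum_distrib_left)

lemma closed_psd_trace_one: "closed {X :: real^'n^'n. psd X \<and> trace X = 1}"
proof -
  have eq: "{X :: real^'n^'n. psd X \<and> trace X = 1} =
      {X. transpose X = X} \<inter> (\<Inter>x. {X. 0 \<le> quad X x}) \<inter> {X. trace X = 1}"
    by (auto simp: psd_iff_quad sym_mat_def)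
  have "linear (transpose :: real^'n^'n \<Rightarrow> real^'n^'n)"
    by (rule linearI) (simp_all add: transpose_def vec_eq_iff)
  moreover have "linear (\<lambda>X. quad X x)" for x :: "real^'n"
    by (rule linearI) simp_all
  moreover have "linear (trace :: real^'n^'n \<Rightarrow> real)"
    by (rule linearI) (simp_all add: trace_add trace_scaleR)
  ultimately have "continuous_on UNIV (transpose :: real^'n^'n \<Rightarrow> real^'n^'n)"
    "continuous_on UNIV (\<lambda>X. quad X x)" "continuous_on UNIV (trace :: real^'n^'n \<Rightarrow> real)"
    for x :: "real^'n"
    by (simp_all only: linear_continuous_on linear_conv_bounded_linear)
  then show ?thesis
    unfolding eq
    by (intro closed_Int closed_INT closed_Collect_eq closed_Collect_le ballI continuous_on_id
        continuous_on_const) auto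
qed

lemma bounded_psd_trace_one: "bounded {X :: real^'n^'n. psd X \<and> trace X = 1}"
proof -
  have "norm X \<le> real CARD('n) * real CARD('n)" if X: "psd X" "trace X = 1" for X :: "real^'n^'n"
  proof -
    have diag_le: "X $ k $ k \<le> 1" for k
      using member_le_sum[of k UNIV "\<lambda>i. X $ i $ i"] psd_diag_nonneg[OF X(1)] X(2)
      by (simp add: trace_def)
    have "(X $ i $ j)\<^sup>2 \<le> 1" for i j
      using psd_bilin_square_le[OF X(1), of "axis i 1" "axis j 1"] psd_diag_nonneg[OF X(1)] diag_le
      by (simp add: bilin_axis quad_axis) (meson mult_le_one order.trans)
    then have "norm (X $ i) \<le> real CARD('n)" for i
      using norm_le_l1_cart[of "X $ i"] sum_mono[of UNIV "\<lambda>j. \<bar>X $ i $ j\<bar>" "\<lambda>_. 1"]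
      by (simp add: abs_square_le_1)
    then have "(\<Sum>i\<in>UNIV. norm (X $ i)) \<le> real CARD('n) * real CARD('n)"
      using sum_mono[of UNIV "\<lambda>i. norm (X $ i)" "\<lambda>_. real CARD('n)"] by simp
    moreover have "norm X \<le> (\<Sum>i\<in>UNIV. norm (X $ i))"
      unfolding norm_vec_def by (rule L2_set_le_sum) simp
    ultimately show ?thesis
      by linarith
  qed
  then show ?thesis
    unfolding bounded_iff by blast
qed

lemma span_pair_obtain:
  assumes "y \<in> span {u, v}"
  obtains s t where "y = s *\<^sub>R u + t *\<^sub>R v"
proof -
  obtain s where "y - s *\<^sub>R u \<in> span {v}"
    using assms by (auto simp: span_insert)
  then obtain t where "y - s *\<^sub>R u = t *\<^sub>R v"
    by (auto simp: span_singleton)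
  then show ?thesis
    using that[of s t] by (simp add: algebra_simps)
qed

lemma quad_eq_inner_outer: "quad M x = M \<bullet> outer x x"
  by (simp add: quad_def inner_vec_def matrix_vector_mult_def outer_def sum_distrib_left mult_ac)

lemma inner_transpose: "A \<bullet> transpose (B :: real^'n^'n) = transpose A \<bullet> B"
proof -
  have "A \<bullet> transpose B = (\<Sum>i\<in>UNIV. \<Sum>j\<in>UNIV. A $ i $ j * B $ j $ i)"
    by (simp add: inner_vec_def transpose_def)
  also have "\<dots> = transpose A \<bullet> B"
    by (subst sum.swap) (simp add: inner_vec_def transpose_def)
  finally show ?thesis .
qed

lemma mat_inner_eq_inner: "sym_mat M \<Longrightarrow> mat_inner M N = M \<bullet> N"
  using inner_transpose[of M N]
  by (simp add: mat_inner_def trace_def matrix_matrix_mult_def inner_vec_def transpose_def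
      sym_mat_def mult.commute)

lemma convex_psd_trace_one: "convex {X :: real^'n^'n. psd X \<and> trace X = 1}"
  by (rule convexI) (auto simp: psd_iff_quad trace_add trace_scaleR
      intro!: sym_mat_add sym_mat_scaleR add_nonneg_nonneg mult_nonneg_nonneg)

text \<open>The compact convex base \<open>{X \<succeq> 0. tr X = 1}\<close> of the psd cone cannot meet the plane
  \<open>span {M\<^sub>1, M\<^sub>2}\<close>, so a hyperplane strictly separates them; as the plane is a subspace,
  the separating functional vanishes on it.\<close>

lemma separating_functional_psd_trace_one:
  fixes M1 M2 :: "real^'n^'n"
  assumes no_comb: "\<nexists>\<alpha>1 \<alpha>2. (\<alpha>1, \<alpha>2) \<noteq> (0, 0) \<and> psd (\<alpha>1 *\<^sub>R M1 + \<alpha>2 *\<^sub>R M2)"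
  obtains A where "A \<bullet> M1 = 0" "A \<bullet> M2 = 0" "\<And>X. psd X \<Longrightarrow> trace X = 1 \<Longrightarrow> A \<bullet> X < 0"
proof -
  define K where "K = {X :: real^'n^'n. psd X \<and> trace X = 1}"
  define L where "L = span {M1, M2}"
  have "psd (mat 1 :: real^'n^'n)"
    by (simp add: psd_iff_quad quad_def sym_mat_def)
  then have "(1 / real CARD('n)) *\<^sub>R mat 1 \<in> K"
    by (simp add: K_def psd_iff_quad sym_mat_scaleR trace_scaleR trace_I)
  moreover have "K \<inter> L = {}"
  proof -
    have "s *\<^sub>R M1 + t *\<^sub>R M2 \<notin> K" for s t
      using no_comb by (cases "(s, t) = (0, 0)") (auto simp: K_def trace_def)
    then show ?thesis
      unfolding L_def by (metis disjoint_iff span_pair_obtain)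
  qed
  moreover have "convex K" "compact K"
    unfolding K_def compact_eq_bounded_closed
    using convex_psd_trace_one closed_psd_trace_one bounded_psd_trace_one by blast+
  ultimately obtain A b where sep: "\<forall>X\<in>K. A \<bullet> X < b" "\<forall>X\<in>L. b < A \<bullet> X"
    using separating_hyperplane_compact_closed[of K L] subspace_imp_convex[OF subspace_span]
    unfolding L_def by (metis closed_span empty_iff)
  have "b < 0"
    using sep(2) span_zero[of "{M1, M2}"] unfolding L_def by fastforce
  have "A \<bullet> M = 0" if "M \<in> L" for M
  proof (rule ccontr)
    assume "A \<bullet> M \<noteq> 0"
    then have "A \<bullet> (((b - 1) / (A \<bullet> M)) *\<^sub>R M) = b - 1"
      by simp
    moreover have "((b - 1) / (A \<bullet> M)) *\<^sub>R M \<in> L"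
      using that unfolding L_def by (rule span_mul)
    ultimately show False
      using sep(2) by fastforce
  qed
  then have "A \<bullet> M1 = 0" "A \<bullet> M2 = 0"
    unfolding L_def by (simp_all add: span_base)
  moreover have "A \<bullet> X < 0" if "psd X" "trace X = 1" for X
    using sep(1) \<open>b < 0\<close> that unfolding K_def by fastforce
  ultimately show ?thesis
    using that by blast
qed

lemma exists_pos_def_orthogonal:
  fixes M1 M2 :: "real^'n^'n"
  assumes "sym_mat M1" "sym_mat M2"
    and no_comb: "\<nexists>\<alpha>1 \<alpha>2. (\<alpha>1, \<alpha>2) \<noteq> (0, 0) \<and> psd (\<alpha>1 *\<^sub>R M1 + \<alpha>2 *\<^sub>R M2)"
  obtains Z where "sym_mat Z" "\<And>x. x \<noteq> 0 \<Longrightarrow> 0 < quad Z x"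
    "mat_inner M1 Z = 0" "mat_inner M2 Z = 0"
proof -
  obtain A where A: "A \<bullet> M1 = 0" "A \<bullet> M2 = 0" "\<And>X. psd X \<Longrightarrow> trace X = 1 \<Longrightarrow> A \<bullet> X < 0"
    using separating_functional_psd_trace_one[OF no_comb] by blast
  define Z where "Z = Sym (- A)"
  have transpose_uminus: "transpose (- B) = - transpose B" for B :: "real^'n^'n"
    by (simp add: transpose_def vec_eq_iff)
  have "0 < quad Z x" if "x \<noteq> 0" for x
  proof -
    have "trace (outer x x) = x \<bullet> x"
      by (simp add: trace_def outer_def inner_vec_def)
    then have "A \<bullet> ((1 / (x \<bullet> x)) *\<^sub>R outer x x) < 0"
      using psd_outer_self[of x] that
      by (intro A(3)) (simp_all add: psd_iff_quad sym_mat_scaleR trace_scaleR)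
    then have "A \<bullet> outer x x / (x \<bullet> x) < 0"
      by simp
    moreover have "quad Z x = - (A \<bullet> outer x x)"
      using inner_transpose[of A "outer x x"]
      by (simp add: Z_def Sym_def quad_eq_inner_outer transpose_outer transpose_uminus
          inner_add_left inner_diff_left)
    ultimately show ?thesis
      using inner_ge_zero[of x] by (auto simp: divide_less_0_iff)
  qed
  moreover have "mat_inner M Z = 0" if "sym_mat M" "A \<bullet> M = 0" for M
    using that inner_transpose[of M A]
    by (simp add: mat_inner_eq_inner Z_def Sym_def sym_mat_def transpose_uminus inner_add_right
        inner_commute)
  ultimately show ?thesis
    using that[of Z] A assms(1,2) by (simp add: Z_def)
qed

lemma ROG_S2_null_decomposition:
  assumes "ROG (S2 M1 M2)" "psd X" "mat_inner M1 X = 0" "mat_inner M2 X = 0"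
  obtains ys where "X = outer_sum ys" "\<forall>y\<in>set ys. quad M1 y = 0 \<and> quad M2 y = 0"
proof -
  have "X \<in> S2 M1 M2"
    using assms(2-4) by (simp add: S2_def)
  with assms(1) have "rank_one_decomposable M1 M2 X"
    by (simp add: ROG_S2_iff)
  then obtain ys where ys: "X = outer_sum ys" "\<forall>y\<in>set ys. 0 \<le> quad M1 y \<and> 0 \<le> quad M2 y"
    by (auto simp: rank_one_decomposable_def)
  have "sum_list (map (quad M1) ys) = 0" "sum_list (map (quad M2) ys) = 0"
    using assms(3,4) ys(1) by (simp_all add: mat_inner_outer_sum)
  then have "\<forall>y\<in>set ys. quad M1 y = 0 \<and> quad M2 y = 0"
    using ys(2) sum_list_nonneg_eq_0_iff[of "map (quad M1) ys"]
      sum_list_nonneg_eq_0_iff[of "map (quad M2) ys"] by auto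
  with ys(1) show ?thesis
    using that by blast
qed

lemma span_outer_sum_pos_def:
  assumes "\<And>x. x \<noteq> 0 \<Longrightarrow> 0 < quad (outer_sum ys) x"
  shows "span (set ys) = UNIV"
proof (rule ccontr)
  assume "span (set ys) \<noteq> UNIV"
  then obtain x where "x \<noteq> 0" "\<And>y. y \<in> span (set ys) \<Longrightarrow> orthogonal x y"
    using orthogonal_to_subspace_exists_gen[of "set ys" UNIV] by auto
  then have "\<forall>y\<in>set ys. y \<bullet> x = 0"
    by (simp add: orthogonal_def inner_commute span_base)
  then have "quad (outer_sum ys) x = 0"
    unfolding quad_outer_sum by (subst sum_list_nonneg_eq_0_iff) auto
  then show False
    using assms \<open>x \<noteq> 0\<close> by fastforce
qed

lemma bilin_zero_on_spanning_set:
  assumes "span S = UNIV" "\<And>x y. x \<in> S \<Longrightarrow> y \<in> S \<Longrightarrow> bilin M x y = 0"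
  shows "M = 0"
proof -
  have "M *v y = 0" if "y \<in> S" for y
  proof -
    have "orthogonal (M *v y) x" if "x \<in> S" for x
      using assms(2)[OF that \<open>y \<in> S\<close>] by (simp add: bilin_def orthogonal_def inner_commute)
    then have "orthogonal (M *v y) (M *v y)"
      using orthogonal_to_span assms(1) by blast
    then show ?thesis
      by (simp add: orthogonal_self)
  qed
  then have "M *v x = 0" for x
    using linear_eq_0_on_span[OF matrix_vector_mul_linear, of S M x] assms(1) by auto
  then show ?thesis
    by (simp add: matrix_eq)
qed

text \<open>A positive definite \<open>Z\<close> with \<open>\<langle>M\<^sub>i, Z\<rangle> = 0\<close> decomposes into common isotropic vectors that
  span the whole space; since \<open>M\<^sub>1 \<noteq> 0\<close>, its bilinear form cannot vanish on all pairs of them.\<close>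

lemma exists_isotropic_pair:
  fixes M1 M2 :: "real^'n^'n"
  assumes "sym_mat M1" "sym_mat M2" "ROG (S2 M1 M2)"
    and no_comb: "\<nexists>\<alpha>1 \<alpha>2. (\<alpha>1, \<alpha>2) \<noteq> (0, 0) \<and> psd (\<alpha>1 *\<^sub>R M1 + \<alpha>2 *\<^sub>R M2)"
  obtains y1 y2 where "quad M1 y1 = 0" "quad M2 y1 = 0" "quad M1 y2 = 0" "quad M2 y2 = 0"
    "bilin M1 y1 y2 \<noteq> 0"
proof -
  obtain Z where Z: "sym_mat Z" "\<And>x. x \<noteq> 0 \<Longrightarrow> 0 < quad Z x"
    "mat_inner M1 Z = 0" "mat_inner M2 Z = 0"
    using exists_pos_def_orthogonal[OF assms(1,2) no_comb] by blast
  have "0 \<le> quad Z x" for x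
    using Z(2)[of x] by (cases "x = 0") auto
  then have "psd Z"
    using Z(1) by (simp add: psd_iff_quad)
  then obtain ys where ys: "Z = outer_sum ys" "\<forall>y\<in>set ys. quad M1 y = 0 \<and> quad M2 y = 0"
    using ROG_S2_null_decomposition[OF assms(3) _ Z(3,4)] by blast
  have "M1 \<noteq> 0"
  proof
    assume "M1 = 0"
    then have "psd (1 *\<^sub>R M1 + 0 *\<^sub>R M2)"
      by (simp add: psd_iff_quad)
    moreover have "(1::real, 0::real) \<noteq> (0, 0)"
      by simp
    ultimately show False
      using no_comb by blast
  qed
  moreover have "span (set ys) = UNIV"
    using span_outer_sum_pos_def Z(2) ys(1) by blast
  ultimately obtain y1 y2 where "y1 \<in> set ys" "y2 \<in> set ys" "bilin M1 y1 y2 \<noteq> 0"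
    using bilin_zero_on_spanning_set[of "set ys" M1] by auto
  then show ?thesis
    using that ys(2) by blast
qed

section \<open>Dependence on balanced pairs\<close>

text \<open>If \<open>quad N\<^sub>i u + quad N\<^sub>i v = 0\<close>, the restriction of \<open>quad N\<^sub>i\<close> to \<open>span {u, v}\<close> is
  \<open>(s, t) \<mapsto> p\<^sub>i (s\<^sup>2 - t\<^sup>2) + 2 q\<^sub>i s t\<close> with \<open>p\<^sub>i = quad N\<^sub>i u\<close>, \<open>q\<^sub>i = bilin N\<^sub>i u v\<close>. The condition says
  that the two restrictions are linearly dependent; otherwise they have no common zero but \<open>0\<close>.\<close>

definition pair_dependent :: "real^'n^'n \<Rightarrow> real^'n^'n \<Rightarrow> bool" where
  "pair_dependent N1 N2 \<longleftrightarrow> (\<forall>u v. quad N1 u + quad N1 v = 0 \<longrightarrow> quad N2 u + quad N2 v = 0 \<longrightarrow>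
      quad N1 u * bilin N2 u v = quad N2 u * bilin N1 u v)"

lemma linear_system_2x2_trivial:
  fixes A B p1 q1 p2 q2 :: real
  assumes "A * p1 + B * q1 = 0" "A * p2 + B * q2 = 0" "p1 * q2 \<noteq> p2 * q1"
  shows "A = 0 \<and> B = 0"
proof -
  have "A * (p1 * q2 - p2 * q1) = q2 * (A * p1 + B * q1) - q1 * (A * p2 + B * q2)"
    "B * (p1 * q2 - p2 * q1) = p1 * (A * p2 + B * q2) - p2 * (A * p1 + B * q1)"
    by (simp_all add: algebra_simps)
  then have "A * (p1 * q2 - p2 * q1) = 0" "B * (p1 * q2 - p2 * q1) = 0"
    using assms(1,2) by simp_all
  then show ?thesis
    using assms(3) by simp
qed

lemma ROG_imp_pair_dependent:
  assumes "ROG (S2 M1 M2)" "sym_mat M1" "sym_mat M2"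
  shows "pair_dependent M1 M2"
  unfolding pair_dependent_def
proof (intro allI impI)
  fix u v
  assume balanced: "quad M1 u + quad M1 v = 0" "quad M2 u + quad M2 v = 0"
  show "quad M1 u * bilin M2 u v = quad M2 u * bilin M1 u v"
  proof (rule ccontr)
    assume det: "quad M1 u * bilin M2 u v \<noteq> quad M2 u * bilin M1 u v"
    obtain ys where ys: "outer_sum [u, v] = outer_sum ys" "\<forall>y\<in>set ys. quad M1 y = 0 \<and> quad M2 y = 0"
      using ROG_S2_null_decomposition[OF assms(1) psd_outer_sum, of "[u, v]"] balanced
      by (auto simp: mat_inner_outer_sum)
    have zero: "y = 0" if y_in: "y \<in> set ys" for y
    proof -
      obtain s t where y: "y = s *\<^sub>R u + t *\<^sub>R v"
        using outer_sum_member_in_span[OF ys(1)[symmetric] y_in] by (auto elim: span_pair_obtain)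
      have "quad M y = (s\<^sup>2 - t\<^sup>2) * quad M u + 2 * s * t * bilin M u v"
        if "sym_mat M" "quad M u + quad M v = 0" for M
      proof -
        have "quad M v = - quad M u"
          using that(2) by linarith
        then show ?thesis
          using quad_lincomb[OF that(1), of s u t v] by (simp add: y algebra_simps)
      qed
      then have "(s\<^sup>2 - t\<^sup>2) * quad M1 u + (2 * s * t) * bilin M1 u v = 0"
        "(s\<^sup>2 - t\<^sup>2) * quad M2 u + (2 * s * t) * bilin M2 u v = 0"
        using ys(2) y_in assms(2,3) balanced by auto
      then have "s\<^sup>2 - t\<^sup>2 = 0 \<and> 2 * s * t = 0"
        using det by (rule linear_system_2x2_trivial)
      then show ?thesis
        by (auto simp: y)
    qed
    then have "quad (outer_sum [u, v]) u = 0"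
      unfolding ys(1) quad_outer_sum by (subst sum_list_nonneg_eq_0_iff) (auto dest: zero)
    then have "u = 0"
      by (simp add: add_nonneg_eq_0_iff)
    then show False
      using det by simp
  qed
qed

lemma pair_dependent_transform:
  assumes "pair_dependent M1 M2" "c \<noteq> 0"
  shows "pair_dependent (c *\<^sub>R M1) (M2 + d *\<^sub>R M1)"
  unfolding pair_dependent_def
proof (intro allI impI)
  fix u v
  assume h1: "quad (c *\<^sub>R M1) u + quad (c *\<^sub>R M1) v = 0"
    and h2: "quad (M2 + d *\<^sub>R M1) u + quad (M2 + d *\<^sub>R M1) v = 0"
  have "c * (quad M1 u + quad M1 v) = 0"
    using h1 by (simp add: distrib_left)
  then have "quad M1 u + quad M1 v = 0"
    using assms(2) by simp
  moreover have "quad M2 u + quad M2 v + d * (quad M1 u + quad M1 v) = 0"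
    using h2 by (simp add: algebra_simps)
  ultimately have "quad M1 u + quad M1 v = 0" "quad M2 u + quad M2 v = 0"
    by simp_all
  then have "quad M1 u * bilin M2 u v = quad M2 u * bilin M1 u v"
    using assms(1) by (simp add: pair_dependent_def)
  then show "quad (c *\<^sub>R M1) u * bilin (M2 + d *\<^sub>R M1) u v
      = quad (M2 + d *\<^sub>R M1) u * bilin (c *\<^sub>R M1) u v"
    by (simp add: algebra_simps)
qed

lemma quadratic_zero_at_three_points:
  fixes A B C s :: real
  assumes "\<And>t. t \<in> {s + 1, s + 2, s + 3} \<Longrightarrow> A + B * t + C * t\<^sup>2 = 0"
  shows "A = 0 \<and> B = 0 \<and> C = 0"
proof -
  have e: "A + B * s + B + C * s * s + 2 * C * s + C = 0"
    "A + B * s + 2 * B + C * s * s + 4 * C * s + 4 * C = 0"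
    "A + B * s + 3 * B + C * s * s + 6 * C * s + 9 * C = 0"
    using assms[of "s + 1"] assms[of "s + 2"] assms[of "s + 3"]
    by (simp_all add: power2_eq_square algebra_simps)
  then have "C = 0"
    by linarith
  with e have "A + B * s + B = 0" "A + B * s + 2 * B = 0"
    by simp_all
  then have "B = 0"
    by linarith
  with \<open>C = 0\<close> \<open>A + B * s + B = 0\<close> show ?thesis
    by simp
qed

lemma quad_eq_if_eq_off_hyperplane:
  assumes eq: "\<And>x. e \<bullet> x \<noteq> 0 \<Longrightarrow> quad A x = quad B x" and "e \<noteq> 0"
  shows "quad A x = quad B x"
proof -
  define K where "K = A - B"
  define t0 where "t0 = - (e \<bullet> x) / (e \<bullet> e)"
  have "0 < e \<bullet> e"
    using \<open>e \<noteq> 0\<close> by simp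
  have "quad K x + (bilin K x e + bilin K e x) * t + quad K e * t\<^sup>2 = 0"
    if "t \<in> {t0 + 1, t0 + 2, t0 + 3}" for t
  proof -
    have "e \<bullet> (x + t *\<^sub>R e) \<noteq> 0"
      using that \<open>0 < e \<bullet> e\<close> by (auto simp: t0_def inner_add_right field_simps)
    then have "quad K (x + t *\<^sub>R e) = 0"
      using eq by (simp add: K_def)
    then show ?thesis
      by (simp add: quad_eq_bilin power2_eq_square algebra_simps)
  qed
  then have "quad K x = 0"
    using quadratic_zero_at_three_points by blast
  then show ?thesis
    by (simp add: K_def)
qed

locale normalized_isotropic_pair =
  fixes N1 N2 :: "real^'n^'n" and y1 y2 :: "real^'n"
  assumes sym1: "sym_mat N1" and sym2: "sym_mat N2"
    and dependent: "pair_dependent N1 N2"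
    and isotropic: "quad N1 y1 = 0" "quad N2 y1 = 0" "quad N1 y2 = 0" "quad N2 y2 = 0"
    and normalized: "bilin N1 y1 y2 = 1" "bilin N2 y1 y2 = 0"
begin

lemma swap: "normalized_isotropic_pair N1 N2 y2 y1"
  using sym1 sym2 dependent isotropic normalized bilin_commute[OF sym1, of y1 y2]
    bilin_commute[OF sym2, of y1 y2]
  by unfold_locales auto

text \<open>The dependence condition for \<open>u = y\<^sub>1 + \<mu> y\<^sub>2\<close> and \<open>v = a y\<^sub>1 + b y\<^sub>2 + x\<close>.\<close>

lemma dependent_shifted:
  assumes "2 * \<mu> + 2 * a * b + 2 * a * bilin N1 y1 x + 2 * b * bilin N1 y2 x + quad N1 x = 0"
    and "2 * a * bilin N2 y1 x + 2 * b * bilin N2 y2 x + quad N2 x = 0"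
  shows "\<mu> * (bilin N2 y1 x + \<mu> * bilin N2 y2 x) = 0"
proof -
  define u where "u = y1 + \<mu> *\<^sub>R y2"
  define v where "v = a *\<^sub>R y1 + b *\<^sub>R y2 + x"
  have zero: "bilin N1 y1 y1 = 0" "bilin N2 y1 y1 = 0" "bilin N1 y2 y2 = 0" "bilin N2 y2 y2 = 0"
    using isotropic by (simp_all add: quad_eq_bilin)
  have flip: "bilin N1 y2 y1 = 1" "bilin N2 y2 y1 = 0"
    "bilin N1 x y1 = bilin N1 y1 x" "bilin N1 x y2 = bilin N1 y2 x"
    "bilin N2 x y1 = bilin N2 y1 x" "bilin N2 x y2 = bilin N2 y2 x"
    using normalized bilin_commute[OF sym1] bilin_commute[OF sym2] by metis+
  have "quad N1 u + quad N1 v = 0" "quad N2 u + quad N2 v = 0"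
    using assms by (simp_all add: u_def v_def quad_eq_bilin zero flip normalized algebra_simps)
  then have "quad N1 u * bilin N2 u v = quad N2 u * bilin N1 u v"
    using dependent by (simp add: pair_dependent_def)
  then show ?thesis
    by (simp add: u_def v_def quad_eq_bilin zero flip normalized algebra_simps)
qed

text \<open>Solving the two balance conditions for \<open>b\<close> and \<open>\<mu>\<close> as functions of \<open>a\<close> gives a
  continuous \<open>\<mu>\<close> with values in \<open>{0, -\<beta>\<^sub>1/\<beta>\<^sub>2}\<close>, where \<open>\<beta>\<^sub>i = bilin N\<^sub>2 y\<^sub>i x\<close>;
  so \<open>\<mu>\<close> is constant, yet its second difference is \<open>2\<beta>\<^sub>1/\<beta>\<^sub>2\<close>.\<close>

lemma bilin_y1_times_bilin_y2_zero: "bilin N2 y1 x * bilin N2 y2 x = 0"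
proof (rule ccontr)
  assume "bilin N2 y1 x * bilin N2 y2 x \<noteq> 0"
  then have B1: "bilin N2 y1 x \<noteq> 0" and B2: "bilin N2 y2 x \<noteq> 0"
    by auto
  define b where "b a = - (quad N2 x + 2 * a * bilin N2 y1 x) / (2 * bilin N2 y2 x)" for a
  define \<mu> where "\<mu> a = - a * b a - a * bilin N1 y1 x - b a * bilin N1 y2 x - quad N1 x / 2" for a
  have \<mu>_eq: "\<mu> a * (bilin N2 y1 x + \<mu> a * bilin N2 y2 x) = 0" for a
    by (rule dependent_shifted[of _ a "b a"]) (simp_all add: \<mu>_def b_def B2 field_simps)
  have "\<mu> a \<in> {0, - bilin N2 y1 x / bilin N2 y2 x}" for a
  proof -
    have "\<mu> a = 0 \<or> bilin N2 y1 x + \<mu> a * bilin N2 y2 x = 0"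
      using \<mu>_eq[of a] by simp
    moreover have "\<mu> a = - bilin N2 y1 x / bilin N2 y2 x"
      if "bilin N2 y1 x + \<mu> a * bilin N2 y2 x = 0"
      using that B2 by (metis add_eq_0_iff nonzero_mult_div_cancel_right)
    ultimately show ?thesis
      by blast
  qed
  then have "range \<mu> \<subseteq> {0, - bilin N2 y1 x / bilin N2 y2 x}"
    by blast
  then have "finite (range \<mu>)"
    by (rule finite_subset) simp
  moreover have "continuous_on UNIV \<mu>"
    unfolding \<mu>_def b_def using B2 by (intro continuous_intros) auto
  ultimately have "\<mu> constant_on UNIV"
    by (intro continuous_finite_range_constant) auto
  then have "\<mu> 1 + \<mu> (-1) - 2 * \<mu> 0 = 0"
    by (auto simp: constant_on_def)
  moreover have "\<mu> 1 + \<mu> (-1) - 2 * \<mu> 0 = 2 * bilin N2 y1 x / bilin N2 y2 x"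
    using B2 by (simp add: \<mu>_def b_def field_simps)
  ultimately show False
    using B1 B2 by simp
qed

lemma y1_or_y2_in_kernel: "N2 *v y1 = 0 \<or> N2 *v y2 = 0"
proof (rule ccontr)
  define a b where "a = N2 *v y1" and "b = N2 *v y2"
  assume "\<not> (N2 *v y1 = 0 \<or> N2 *v y2 = 0)"
  then have "a \<noteq> 0" "b \<noteq> 0"
    by (simp_all add: a_def b_def)
  have prod: "(a \<bullet> x) * (b \<bullet> x) = 0" for x
    using bilin_y1_times_bilin_y2_zero[of x] by (simp add: a_def b_def bilin_eq_inner_mult[OF sym2])
  then have "a \<bullet> b = 0"
    using prod[of a] \<open>a \<noteq> 0\<close> by (simp add: inner_commute)
  then have "(a \<bullet> a) * (b \<bullet> b) = 0"
    using prod[of "a + b"] by (simp add: inner_add_right inner_commute)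
  then show False
    using \<open>a \<noteq> 0\<close> \<open>b \<noteq> 0\<close> by simp
qed

lemma quad_eqs_if_y1_in_kernel:
  assumes "N2 *v y1 = 0" "bilin N2 y2 x \<noteq> 0"
  shows "quad N2 x = 2 * bilin N1 y1 x * bilin N2 y2 x"
    and "quad N1 x = 2 * bilin N1 y1 x * bilin N1 y2 x"
proof -
  have B1: "bilin N2 y1 x = 0"
    using assms(1) by (simp add: bilin_eq_inner_mult[OF sym2])
  define b where "b = - quad N2 x / (2 * bilin N2 y2 x)"
  have h2: "2 * a * bilin N2 y1 x + 2 * b * bilin N2 y2 x + quad N2 x = 0" for a
    using assms(2) by (simp add: B1 b_def)
  define \<mu>0 where "\<mu>0 = - b * bilin N1 y2 x - quad N1 x / 2"
  have "\<mu>0 * (bilin N2 y1 x + \<mu>0 * bilin N2 y2 x) = 0"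
    by (rule dependent_shifted[OF _ h2[of 0]]) (simp add: \<mu>0_def)
  then have "\<mu>0 = 0"
    using B1 assms(2) by simp
  define \<mu>1 where "\<mu>1 = - b - bilin N1 y1 x - b * bilin N1 y2 x - quad N1 x / 2"
  have "\<mu>1 * (bilin N2 y1 x + \<mu>1 * bilin N2 y2 x) = 0"
    by (rule dependent_shifted[OF _ h2[of 1]]) (simp add: \<mu>1_def)
  then have "\<mu>1 = 0"
    using B1 assms(2) by simp
  then have "b = - bilin N1 y1 x"
    using \<open>\<mu>0 = 0\<close> by (simp add: \<mu>0_def \<mu>1_def)
  then show "quad N2 x = 2 * bilin N1 y1 x * bilin N2 y2 x"
    "quad N1 x = 2 * bilin N1 y1 x * bilin N1 y2 x"
    using \<open>\<mu>0 = 0\<close> assms(2) by (simp_all add: b_def \<mu>0_def field_simps)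
qed

lemma Sym_outer_if_y1_in_kernel:
  assumes "N2 *v y1 = 0" "N2 *v y2 \<noteq> 0"
  shows "N1 = Sym (outer (2 *\<^sub>R (N1 *v y2)) (N1 *v y1))"
    and "N2 = Sym (outer (2 *\<^sub>R (N2 *v y2)) (N1 *v y1))"
proof -
  have inner_mult: "bilin N1 y1 x = (N1 *v y1) \<bullet> x" "bilin N1 y2 x = (N1 *v y2) \<bullet> x"
    "bilin N2 y2 x = (N2 *v y2) \<bullet> x" for x
    by (simp_all add: bilin_eq_inner_mult sym1 sym2)
  have "quad N1 x = quad (Sym (outer (2 *\<^sub>R (N1 *v y2)) (N1 *v y1))) x"
    "quad N2 x = quad (Sym (outer (2 *\<^sub>R (N2 *v y2)) (N1 *v y1))) x" for x
    by (rule quad_eq_if_eq_off_hyperplane[OF _ assms(2)],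
        simp add: quad_eqs_if_y1_in_kernel[OF assms(1)] inner_mult quad_Sym_outer mult_ac)+
  then show "N1 = Sym (outer (2 *\<^sub>R (N1 *v y2)) (N1 *v y1))"
    "N2 = Sym (outer (2 *\<^sub>R (N2 *v y2)) (N1 *v y1))"
    by (simp_all add: sym_mat_eqI sym1 sym2)
qed

lemma dependent_on_kernel_shifts:
  assumes "N2 *v y1 = 0" "N2 *v y2 = 0" "quad N2 p = 1" "quad N2 m = -1"
    and "u = p + \<alpha> *\<^sub>R y1 + \<beta> *\<^sub>R y2" "v = m + \<gamma> *\<^sub>R y1 + \<delta> *\<^sub>R y2" "quad N1 u + quad N1 v = 0"
  shows "quad N1 u * bilin N2 p m = bilin N1 u v"
proof -
  have "bilin N2 y1 w = 0" "bilin N2 y2 w = 0" for w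
    using assms(1,2) by (simp_all add: bilin_eq_inner_mult[OF sym2])
  then have kernel: "bilin N2 w y1 = 0" "bilin N2 w y2 = 0" "bilin N2 y1 w = 0" "bilin N2 y2 w = 0" for w
    using bilin_commute[OF sym2] by metis+
  have N2: "quad N2 u = 1" "quad N2 v = -1" "bilin N2 u v = bilin N2 p m"
    using assms(3-6) by (simp_all add: quad_eq_bilin kernel)
  then have "quad N1 u * bilin N2 u v = quad N2 u * bilin N1 u v"
    using dependent assms(7) unfolding pair_dependent_def by force
  then show ?thesis
    by (simp add: N2)
qed

text \<open>If \<open>y\<^sub>1, y\<^sub>2 \<in> ker N\<^sub>2\<close> and \<open>N\<^sub>2\<close> is indefinite, shifting a positive and a negative vector
  of \<open>N\<^sub>2\<close> along \<open>y\<^sub>1, y\<^sub>2\<close> turns the dependence condition into an identity between a linear and a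
  genuinely quadratic polynomial in a parameter \<open>t\<close>.\<close>

lemma indefinite_imp_not_kernel:
  assumes "0 < quad N2 xp" "quad N2 xm < 0"
  shows "N2 *v y1 \<noteq> 0 \<or> N2 *v y2 \<noteq> 0"
proof (rule ccontr)
  assume "\<not> (N2 *v y1 \<noteq> 0 \<or> N2 *v y2 \<noteq> 0)"
  then have kernel: "N2 *v y1 = 0" "N2 *v y2 = 0"
    by simp_all
  define p where "p = (1 / sqrt (quad N2 xp)) *\<^sub>R xp"
  define m where "m = (1 / sqrt (- quad N2 xm)) *\<^sub>R xm"
  have "quad N2 p = 1" "quad N2 m = -1"
    using assms by (simp_all add: p_def m_def power_divide)
  note dep = dependent_on_kernel_shifts[OF kernel this]
  have zero: "bilin N1 y1 y1 = 0" "bilin N1 y2 y2 = 0"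
    using isotropic by (simp_all add: quad_eq_bilin)
  have flip: "bilin N1 y2 y1 = 1" "bilin N1 p y1 = bilin N1 y1 p" "bilin N1 p y2 = bilin N1 y2 p"
    "bilin N1 m y1 = bilin N1 y1 m" "bilin N1 m y2 = bilin N1 y2 m" "bilin N1 m p = bilin N1 p m"
    using normalized bilin_commute[OF sym1] by metis+
  define e1 e2 g1 g2 where "e1 = bilin N1 y1 p" and "e2 = bilin N1 y2 p"
    and "g1 = bilin N1 y1 m" and "g2 = bilin N1 y2 m"
  define f h k where "f = quad N1 p - 2 * e1 * e2" and "h = quad N1 m - 2 * g1 * g2"
    and "k = bilin N1 p m - e2 * g1 - e1 * g2"
  have identity: "(2 * t + f) * bilin N2 p m = t * (- t - (f + h) / 2) + 1 + k" for t
  proof -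
    define s where "s = - t - (f + h) / 2"
    define u where "u = p + (t - e2) *\<^sub>R y1 + (1 - e1) *\<^sub>R y2"
    define v where "v = m + (1 - g2) *\<^sub>R y1 + (s - g1) *\<^sub>R y2"
    have "quad N1 u = 2 * t + f"
      unfolding u_def f_def e1_def e2_def quad_eq_bilin using zero flip normalized
      by (simp add: quad_eq_bilin algebra_simps)
    moreover have "quad N1 v = 2 * s + h"
      unfolding v_def h_def g1_def g2_def quad_eq_bilin using zero flip normalized
      by (simp add: quad_eq_bilin algebra_simps)
    moreover have "bilin N1 u v = t * s + 1 + k"
      unfolding u_def v_def k_def e1_def e2_def g1_def g2_def using zero flip normalized
      by (simp add: algebra_simps)
    ultimately show ?thesis
      using dep[OF u_def v_def] by (simp add: s_def field_simps)
  qed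
  from identity[of 0] identity[of 1] identity[of "-1"] show False
    by (simp add: algebra_simps) (simp add: field_simps)
qed

lemma Sym_outer_if_indefinite:
  assumes "0 < quad N2 xp" "quad N2 xm < 0"
  shows "\<exists>a b c. N1 = Sym (outer a c) \<and> N2 = Sym (outer b c)"
proof -
  interpret swapped: normalized_isotropic_pair N1 N2 y2 y1
    by (rule swap)
  show ?thesis
    using y1_or_y2_in_kernel indefinite_imp_not_kernel[OF assms]
      Sym_outer_if_y1_in_kernel swapped.Sym_outer_if_y1_in_kernel by metis
qed

end

text \<open>With \<open>w\<^sub>i = bilin M\<^sub>i y\<^sub>1 y\<^sub>2\<close>, pass to \<open>N\<^sub>1 = M\<^sub>1 / w\<^sub>1\<close> and
  \<open>N\<^sub>2 = M\<^sub>2 - (w\<^sub>2 / w\<^sub>1) M\<^sub>1\<close>; this spans the same pencil, so \<open>N\<^sub>2\<close> is indefinite.\<close>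

lemma Sym_outer_if_ROG_no_psd_combination:
  fixes M1 M2 :: "real^'n^'n"
  assumes "sym_mat M1" "sym_mat M2" "ROG (S2 M1 M2)"
    and no_comb: "\<nexists>\<alpha>1 \<alpha>2. (\<alpha>1, \<alpha>2) \<noteq> (0, 0) \<and> psd (\<alpha>1 *\<^sub>R M1 + \<alpha>2 *\<^sub>R M2)"
  shows "\<exists>a b c. M1 = Sym (outer a c) \<and> M2 = Sym (outer b c)"
proof -
  obtain y1 y2 where iso: "quad M1 y1 = 0" "quad M2 y1 = 0" "quad M1 y2 = 0" "quad M2 y2 = 0"
    and "bilin M1 y1 y2 \<noteq> 0"
    using exists_isotropic_pair[OF assms] by blast
  define w1 w2 where "w1 = bilin M1 y1 y2" and "w2 = bilin M2 y1 y2"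
  have "w1 \<noteq> 0"
    using \<open>bilin M1 y1 y2 \<noteq> 0\<close> by (simp add: w1_def)
  define N1 N2 where "N1 = (1 / w1) *\<^sub>R M1" and "N2 = M2 + (- w2 / w1) *\<^sub>R M1"
  interpret normalized_isotropic_pair N1 N2 y1 y2
  proof
    show "sym_mat N1" "sym_mat N2"
      using assms(1,2) by (simp_all add: N1_def N2_def sym_mat_diff sym_mat_scaleR)
    show "pair_dependent N1 N2"
      unfolding N1_def N2_def using \<open>w1 \<noteq> 0\<close>
      by (intro pair_dependent_transform ROG_imp_pair_dependent assms) simp
    show "quad N1 y1 = 0" "quad N2 y1 = 0" "quad N1 y2 = 0" "quad N2 y2 = 0"
      by (simp_all add: N1_def N2_def iso)
    show "bilin N1 y1 y2 = 1" "bilin N2 y1 y2 = 0"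
      using \<open>w1 \<noteq> 0\<close> by (simp_all add: N1_def N2_def w1_def w2_def)
  qed
  have not_psd: "\<not> psd (\<alpha>1 *\<^sub>R M1 + \<alpha>2 *\<^sub>R M2)" if "\<alpha>2 \<noteq> 0" for \<alpha>1 \<alpha>2
    using no_comb that by blast
  have "N2 = (- w2 / w1) *\<^sub>R M1 + 1 *\<^sub>R M2" "- N2 = (w2 / w1) *\<^sub>R M1 + (- 1) *\<^sub>R M2"
    by (simp_all add: N2_def algebra_simps)
  then have "\<not> psd N2" "\<not> psd (- N2)"
    using not_psd by (metis one_neq_zero, metis neg_equal_0_iff_equal one_neq_zero)
  then obtain xp xm where "0 < quad N2 xp" "quad N2 xm < 0"
    using sym2 sym_mat_uminus[OF sym2] by (auto simp: psd_iff_quad not_le)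
  then obtain a b c where "N1 = Sym (outer a c)" "N2 = Sym (outer b c)"
    using Sym_outer_if_indefinite by blast
  moreover have "M1 = w1 *\<^sub>R N1" "M2 = N2 + w2 *\<^sub>R N1"
    using \<open>w1 \<noteq> 0\<close> by (simp_all add: N1_def N2_def)
  ultimately have "M1 = Sym (outer (w1 *\<^sub>R a) c)" "M2 = Sym (outer (b + w2 *\<^sub>R a) c)"
    by (simp_all add: Sym_outer_add Sym_outer_scaleR)
  then show ?thesis
    by blast
qed

theorem theorem4p1:
  fixes M1 M2 :: "real^'n^'n"
  assumes "sym_mat M1" and "sym_mat M2"
  shows "ROG (S2 M1 M2) \<longleftrightarrow>
    ((\<exists>\<alpha>1 \<alpha>2::real. (\<alpha>1, \<alpha>2) \<noteq> (0, 0) \<and> psd (\<alpha>1 *\<^sub>R M1 + \<alpha>2 *\<^sub>R M2)) \<or>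
     (\<exists>a b c :: real^'n. M1 = Sym (outer a c) \<and> M2 = Sym (outer b c)))"
proof
  assume "ROG (S2 M1 M2)"
  then show "(\<exists>\<alpha>1 \<alpha>2::real. (\<alpha>1, \<alpha>2) \<noteq> (0, 0) \<and> psd (\<alpha>1 *\<^sub>R M1 + \<alpha>2 *\<^sub>R M2)) \<or>
     (\<exists>a b c :: real^'n. M1 = Sym (outer a c) \<and> M2 = Sym (outer b c))"
    using Sym_outer_if_ROG_no_psd_combination[OF assms] by blast
next
  assume "(\<exists>\<alpha>1 \<alpha>2::real. (\<alpha>1, \<alpha>2) \<noteq> (0, 0) \<and> psd (\<alpha>1 *\<^sub>R M1 + \<alpha>2 *\<^sub>R M2)) \<or>
     (\<exists>a b c :: real^'n. M1 = Sym (outer a c) \<and> M2 = Sym (outer b c))"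
  then show "ROG (S2 M1 M2)"
    unfolding ROG_S2_iff
    by (elim disjE exE conjE) (simp_all add: rank_one_decomposable_if_psd_combination rank_one_decomposable_Sym_outer)
qed

end
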